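(* Let $(\phi_1,\dots,\phi_n)$, $n\ge2$, be a Chebyshev asymptotic scale on $[T,x_0[$ with $\phi_i\in AC^{n-1}[T,x_0[$ and $W(\phi_1,\dots,\phi_i)>0$ on $[T,x_0[$ for $1\le i\le n$. Let $a_1,\dots,a_n$ be nonzero real constants and $u:=a_1\phi_1+\dots+a_n\phi_n$. Define $\psi^{(1)}_j:=\phi_j$ ($1\le j\le n$) and recursively, for $k=1,\dots,n-1$, $\psi^{(k+1)}_j:=\big(\psi^{(k)}_j/\psi^{(k)}_k\big)'$ for $k+1\le j\le n$; define $U_1:=u$ and $U_{k+1}:=\big(U_k/\psi^{(k)}_k\big)'$ for $1\le k\le n$. Then all these functions are well defined on $[T,x_0[$, each $\psi^{(k)}_k$ never vanishes on $[T,x_0[$, and for $1\le k\le n$: $U_k=\sum_{j=k}^na_j\psi^{(k)}_j$ on $[T,x_0[$ with $\psi^{(k)}_k\gg\psi^{(k)}_{k+1}\gg\dots\gg\psi^{(k)}_n$ as $x\to x_0^-$; $1/\psi^{(k)}_k=q_{k-1}$ on $[T,x_0[$; $U_{n+1}\equiv0$, i.e. $[q_{n-1}(\cdots(q_0u)'\cdots)']'\equiv0$ on $[T,x_0[$; $M_{k-1}u=U_k/\psi^{(k)}_k$; and $a_k=\lim_{x\to x_0^-}M_{k-1}u(x)$.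
   Context: $T\in\mathbb R$, $x_0\in\mathbb R\cup\{+\infty\}$, $T<x_0$. $AC^k(I)$: functions whose $k$-th derivative is absolutely continuous on every compact subinterval of $I$. $W(\cdot)$ is the Wronskian; $g\gg h$ as $x\to x_0^-$ means $h/g\to0$. A Chebyshev asymptotic scale on $[T,x_0[$: real $\phi_i\in C^{n-1}[T,x_0[$, each nonzero on a left deleted neighbourhood of $x_0$, $\phi_1\gg\dots\gg\phi_n$ as $x\to x_0^-$, $W(\phi_1,\dots,\phi_i)\neq0$ on $[T,x_0[$. With $W_i:=W(\phi_1,\dots,\phi_i)$, $W_0:=1$: $q_0:=1/|\phi_1|$, $q_i:=W_i^2/|W_{i-1}W_{i+1}|$ ($1\le i\le n-1$), $q_n:=|W_n/W_{n-1}|$; $M_0v:=q_0v$, $M_kv:=q_k(M_{k-1}v)'$. *)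

theory Defs
  imports "HOL-Analysis.Analysis"
begin

definition lint :: "real \<Rightarrow> ereal \<Rightarrow> real set" where
  "lint T x0 = {x. T \<le> x \<and> ereal x < x0}"

definition left_filter :: "ereal \<Rightarrow> real filter" where
  "left_filter x0 = (if x0 = \<infinity> then at_top else at_left (real_of_ereal x0))"

definition dominates :: "real filter \<Rightarrow> (real \<Rightarrow> real) \<Rightarrow> (real \<Rightarrow> real) \<Rightarrow> bool" where
  "dominates F g h \<longleftrightarrow> ((\<lambda>x. h x / g x) \<longlongrightarrow> 0) F"

text \<open>Derivative relative to the set S (one-sided at endpoints belonging to S).\<close>
definition Dw :: "real set \<Rightarrow> (real \<Rightarrow> real) \<Rightarrow> real \<Rightarrow> real" where
  "Dw S f x = vector_derivative f (at x within S)"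

definition hderiv :: "real set \<Rightarrow> nat \<Rightarrow> (real \<Rightarrow> real) \<Rightarrow> real \<Rightarrow> real" where
  "hderiv S k f = (Dw S ^^ k) f"

definition Ck_on :: "real set \<Rightarrow> nat \<Rightarrow> (real \<Rightarrow> real) \<Rightarrow> bool" where
  "Ck_on S k f \<longleftrightarrow>
     (\<forall>j<k. \<forall>x\<in>S. (hderiv S j f has_vector_derivative hderiv S (Suc j) f x) (at x within S))
     \<and> continuous_on S (hderiv S k f)"

definition abs_cont_on :: "real \<Rightarrow> real \<Rightarrow> (real \<Rightarrow> real) \<Rightarrow> bool" where
  "abs_cont_on c d f \<longleftrightarrow>
     (\<forall>\<epsilon>>0. \<exists>\<delta>>0. \<forall>(m::nat) (l::nat \<Rightarrow> real) r.
        (\<forall>i<m. c \<le> l i \<and> l i \<le> r i \<and> r i \<le> d) \<and>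
        (\<forall>i<m. \<forall>j<m. i \<noteq> j \<longrightarrow> r i \<le> l j \<or> r j \<le> l i) \<and>
        (\<Sum>i<m. r i - l i) < \<delta>
        \<longrightarrow> (\<Sum>i<m. \<bar>f (r i) - f (l i)\<bar>) < \<epsilon>)"

definition ACk_on :: "real set \<Rightarrow> nat \<Rightarrow> (real \<Rightarrow> real) \<Rightarrow> bool" where
  "ACk_on S k f \<longleftrightarrow> (\<forall>c d. {c..d} \<subseteq> S \<longrightarrow> abs_cont_on c d (hderiv S k f))"

definition wronskian :: "real set \<Rightarrow> (nat \<Rightarrow> real \<Rightarrow> real) \<Rightarrow> nat \<Rightarrow> real \<Rightarrow> real" where
  "wronskian S \<phi> i x =
     (\<Sum>p | p permutes {0..<i}. of_int (sign p) * (\<Prod>r<i. hderiv S r (\<phi> (Suc (p r))) x))"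

definition cheb_asym_scale :: "real \<Rightarrow> ereal \<Rightarrow> nat \<Rightarrow> (nat \<Rightarrow> real \<Rightarrow> real) \<Rightarrow> bool" where
  "cheb_asym_scale T x0 n \<phi> \<longleftrightarrow>
     (\<forall>i\<in>{1..n}. Ck_on (lint T x0) (n - 1) (\<phi> i)) \<and>
     (\<forall>i\<in>{1..n}. eventually (\<lambda>x. \<phi> i x \<noteq> 0) (left_filter x0)) \<and>
     (\<forall>i\<in>{1..<n}. dominates (left_filter x0) (\<phi> i) (\<phi> (Suc i))) \<and>
     (\<forall>i\<in>{1..n}. \<forall>x\<in>lint T x0. wronskian (lint T x0) \<phi> i x \<noteq> 0)"

definition qfun :: "real set \<Rightarrow> (nat \<Rightarrow> real \<Rightarrow> real) \<Rightarrow> nat \<Rightarrow> nat \<Rightarrow> real \<Rightarrow> real" where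
  "qfun S \<phi> n i x =
     (let W = (\<lambda>k. wronskian S \<phi> k x) in
      if i = 0 then 1 / \<bar>\<phi> 1 x\<bar>
      else if i < n then (W i)^2 / \<bar>W (i - 1) * W (Suc i)\<bar>
      else \<bar>W n / W (n - 1)\<bar>)"

primrec Mop :: "real set \<Rightarrow> (nat \<Rightarrow> real \<Rightarrow> real) \<Rightarrow> nat \<Rightarrow> nat \<Rightarrow> (real \<Rightarrow> real) \<Rightarrow> real \<Rightarrow> real" where
  "Mop S \<phi> n 0 v = (\<lambda>x. qfun S \<phi> n 0 x * v x)"
| "Mop S \<phi> n (Suc k) v = (\<lambda>x. qfun S \<phi> n (Suc k) x * Dw S (Mop S \<phi> n k v) x)"

text \<open>psi^{(k)}_j : psi^{(1)}_j = phi_j, psi^{(k+1)}_j = (psi^{(k)}_j / psi^{(k)}_k)'.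
  (The index k = 0 is unused.)\<close>
fun psi :: "real set \<Rightarrow> (nat \<Rightarrow> real \<Rightarrow> real) \<Rightarrow> nat \<Rightarrow> nat \<Rightarrow> real \<Rightarrow> real" where
  "psi S \<phi> 0 j = \<phi> j"
| "psi S \<phi> (Suc 0) j = \<phi> j"
| "psi S \<phi> (Suc (Suc k)) j =
     Dw S (\<lambda>y. psi S \<phi> (Suc k) j y / psi S \<phi> (Suc k) (Suc k) y)"

text \<open>U_1 = u, U_{k+1} = (U_k / psi^{(k)}_k)'. (The index k = 0 is unused.)\<close>
fun Ufun :: "real set \<Rightarrow> (nat \<Rightarrow> real \<Rightarrow> real) \<Rightarrow> (real \<Rightarrow> real) \<Rightarrow> nat \<Rightarrow> real \<Rightarrow> real" where
  "Ufun S \<phi> u 0 = u"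
| "Ufun S \<phi> u (Suc 0) = u"
| "Ufun S \<phi> u (Suc (Suc k)) =
     Dw S (\<lambda>y. Ufun S \<phi> u (Suc k) y / psi S \<phi> (Suc k) (Suc k) y)"

end

theory Submission
  imports Defs "Jordan_Normal_Form.Determinant"
begin

text \<open>Write \<open>\<psi> k j\<close> for \<open>\<psi>\<^sup>(\<^sup>k\<^sup>)\<^sub>j\<close>. Dividing by \<open>\<psi> k k\<close> and differentiating is the classical reduction
  of a Chebyshev system: the Wronskian of \<open>f\<^sub>0, \<dots>, f\<^sub>m\<close> is \<open>f\<^sub>0 ^ (m + 1)\<close> times the Wronskian
  of the derivatives of \<open>f\<^sub>1 / f\<^sub>0, \<dots>, f\<^sub>m / f\<^sub>0\<close>. Iterating gives
  \<open>W\<^sub>k = (\<Prod>i = 1..k. \<psi> i i ^ (k + 1 - i))\<close>, so positivity of the Wronskians makes every \<open>\<psi> k k\<close>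
  nonzero and identifies \<open>1 / \<psi> k k\<close> with \<open>q\<^sub>k\<^sub>-\<^sub>1\<close>. Hence \<open>M\<^sub>k\<^sub>-\<^sub>1 u = U\<^sub>k / \<psi> k k\<close>, which is
  \<open>\<Sum>j = k..n. a\<^sub>j \<psi> k j / \<psi> k k\<close>, and \<open>U\<^sub>n\<^sub>+\<^sub>1 = 0\<close> because \<open>U\<^sub>n / \<psi> n n = a\<^sub>n\<close> is constant.

  The asymptotic ordering passes from one level to the next: near \<open>x\<^sub>0\<close> each quotient
  \<open>\<psi> k j / \<psi> k k\<close> has a continuous nonvanishing derivative, so it is eventually monotone and has a
  limit, and l'Hopital's rule shows that the limit of \<open>\<psi> k m / \<psi> k j\<close> does not depend on
  \<open>k \<le> j\<close>; at \<open>k = 1\<close> it is \<open>0\<close>. Hence \<open>M\<^sub>k\<^sub>-\<^sub>1 u \<rightarrow> a\<^sub>k\<close>.\<close>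

section \<open>Derivatives relative to a set\<close>

definition dense_in_itself :: "real set \<Rightarrow> bool" where
  "dense_in_itself S \<longleftrightarrow> (\<forall>x\<in>S. at x within S \<noteq> bot)"

lemma Dw_eqI:
  "dense_in_itself S \<Longrightarrow> x \<in> S \<Longrightarrow> (f has_field_derivative D) (at x within S) \<Longrightarrow> Dw S f x = D"
  unfolding Dw_def dense_in_itself_def
  by (auto intro!: vector_derivative_within simp: has_real_derivative_iff_has_vector_derivative)

lemma Dw_cong:
  assumes "\<forall>y\<in>S. f y = g y" "x \<in> S"
  shows "Dw S f x = Dw S g x"
proof -
  have "(f has_vector_derivative D) (at x within S) \<longleftrightarrow> (g has_vector_derivative D) (at x within S)" for D
    using has_vector_derivative_transform[of x S f g D] has_vector_derivative_transform[of x S g f D] assms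
    by auto
  then show ?thesis unfolding Dw_def vector_derivative_def by simp
qed

lemma has_field_derivative_transform_on:
  fixes f g :: "real \<Rightarrow> real"
  assumes "x \<in> S" "\<forall>y\<in>S. g y = f y" "(f has_field_derivative D) (at x within S)"
  shows "(g has_field_derivative D) (at x within S)"
  using assms has_vector_derivative_transform[of x S g f D]
  by (simp add: has_real_derivative_iff_has_vector_derivative)

lemma hderiv_0 [simp]: "hderiv S 0 f = f"
  by (simp add: hderiv_def)

lemma hderiv_Suc: "hderiv S (Suc k) f = Dw S (hderiv S k f)"
  by (simp add: hderiv_def)

lemma hderiv_Suc_right: "hderiv S (Suc k) f = hderiv S k (Dw S f)"
  by (simp add: hderiv_def funpow_Suc_right del: funpow.simps)

lemma hderiv_cong: "\<forall>y\<in>S. f y = g y \<Longrightarrow> x \<in> S \<Longrightarrow> hderiv S k f x = hderiv S k g x"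
  by (induction k arbitrary: x) (simp_all add: hderiv_Suc Dw_cong)

lemma hderiv_const:
  "dense_in_itself S \<Longrightarrow> x \<in> S \<Longrightarrow> hderiv S k (\<lambda>_. c) x = (if k = 0 then c else 0)"
proof (induction k arbitrary: c x)
  case 0
  then show ?case by simp
next
  case (Suc k)
  have "\<forall>y\<in>S. Dw S (\<lambda>_. c) y = 0"
    using Suc.prems(1) by (auto intro!: Dw_eqI)
  then have "hderiv S (Suc k) (\<lambda>_. c) x = hderiv S k (\<lambda>_. 0) x"
    unfolding hderiv_Suc_right using Suc.prems(2) by (rule hderiv_cong)
  then show ?case using Suc by simp
qed

section \<open>Functions of class \<open>C\<^sup>k\<close> on a set\<close>

lemma Ck_on_0: "Ck_on S 0 f \<longleftrightarrow> continuous_on S f"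
  by (simp add: Ck_on_def)

lemma Ck_on_Suc:
  "Ck_on S (Suc k) f \<longleftrightarrow>
     (\<forall>x\<in>S. (f has_field_derivative Dw S f x) (at x within S)) \<and> Ck_on S k (Dw S f)"
proof -
  have "(\<forall>j<Suc k. P j) \<longleftrightarrow> P 0 \<and> (\<forall>j<k. P (Suc j))" for P
    using less_Suc_eq_0_disj by auto
  then show ?thesis
    unfolding Ck_on_def hderiv_Suc_right[of S k f]
    by (simp add: hderiv_Suc_right[symmetric] has_real_derivative_iff_has_vector_derivative)
      (simp add: hderiv_Suc_right)
qed

lemma Ck_on_Dw: "Ck_on S (Suc k) f \<Longrightarrow> Ck_on S k (Dw S f)"
  by (simp add: Ck_on_Suc)

lemma Ck_on_cong: "\<forall>y\<in>S. f y = g y \<Longrightarrow> Ck_on S k f \<Longrightarrow> Ck_on S k g"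
proof (induction k arbitrary: f g)
  case 0
  then show ?case by (simp add: Ck_on_0 cong: continuous_on_cong)
next
  case (Suc k)
  have Dfg: "\<forall>y\<in>S. Dw S f y = Dw S g y"
    using Suc.prems(1) Dw_cong by blast
  have "\<forall>x\<in>S. (g has_field_derivative Dw S g x) (at x within S)"
  proof
    fix x
    assume "x \<in> S"
    then show "(g has_field_derivative Dw S g x) (at x within S)"
      using Suc.prems Dfg unfolding Ck_on_Suc
      by (intro has_field_derivative_transform_on[of x S g f]) auto
  qed
  moreover have "Ck_on S k (Dw S g)"
    using Suc.IH[OF Dfg] Suc.prems(2) unfolding Ck_on_Suc by blast
  ultimately show ?case unfolding Ck_on_Suc ..
qed

lemma Ck_on_continuous: "Ck_on S k f \<Longrightarrow> continuous_on S f"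
proof (induction k arbitrary: f)
  case 0
  then show ?case by (simp add: Ck_on_0)
next
  case (Suc k)
  then show ?case
    unfolding Ck_on_Suc by (meson DERIV_continuous continuous_on_eq_continuous_within)
qed

lemma Ck_on_Suc_imp: "Ck_on S (Suc k) f \<Longrightarrow> Ck_on S k f"
proof (induction k arbitrary: f)
  case 0
  then show ?case using Ck_on_continuous by (simp add: Ck_on_0)
next
  case (Suc k)
  then show ?case unfolding Ck_on_Suc[of S "Suc k"] Ck_on_Suc[of S k] by blast
qed

lemma Ck_on_mono: "j \<le> k \<Longrightarrow> Ck_on S k f \<Longrightarrow> Ck_on S j f"
  by (induction k rule: dec_induct) (auto intro: Ck_on_Suc_imp)

lemma Ck_on_const: "dense_in_itself S \<Longrightarrow> Ck_on S k (\<lambda>_. c)"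
proof (induction k arbitrary: c)
  case 0
  then show ?case by (simp add: Ck_on_0)
next
  case (Suc k)
  have D: "\<forall>x\<in>S. Dw S (\<lambda>_. c) x = 0"
    using Suc.prems by (auto intro!: Dw_eqI)
  then have "Ck_on S k (Dw S (\<lambda>_. c))"
    using Suc.IH[OF Suc.prems, of 0] Ck_on_cong by (metis (no_types, lifting))
  then show ?case using D by (simp add: Ck_on_Suc)
qed

lemma Ck_on_add:
  "dense_in_itself S \<Longrightarrow> Ck_on S k f \<Longrightarrow> Ck_on S k g \<Longrightarrow> Ck_on S k (\<lambda>y. f y + g y)"
proof (induction k arbitrary: f g)
  case 0
  then show ?case by (simp add: Ck_on_0 continuous_on_add)
next
  case (Suc k)
  have D: "\<forall>x\<in>S. ((\<lambda>y. f y + g y) has_field_derivative Dw S f x + Dw S g x) (at x within S)"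
    using Suc.prems unfolding Ck_on_Suc by (auto intro!: derivative_eq_intros)
  then have Dw_add: "\<forall>x\<in>S. Dw S f x + Dw S g x = Dw S (\<lambda>y. f y + g y) x"
    using Suc.prems(1) by (auto intro!: Dw_eqI[symmetric])
  have "Ck_on S k (\<lambda>x. Dw S f x + Dw S g x)"
    using Suc unfolding Ck_on_Suc by auto
  then have "Ck_on S k (Dw S (\<lambda>y. f y + g y))"
    using Ck_on_cong[OF Dw_add] by blast
  then show ?case unfolding Ck_on_Suc using D Dw_add by simp
qed

lemma Ck_on_mult:
  "dense_in_itself S \<Longrightarrow> Ck_on S k f \<Longrightarrow> Ck_on S k g \<Longrightarrow> Ck_on S k (\<lambda>y. f y * g y)"
proof (induction k arbitrary: f g)
  case 0
  then show ?case by (simp add: Ck_on_0 continuous_on_mult)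
next
  case (Suc k)
  have D: "\<forall>x\<in>S. ((\<lambda>y. f y * g y) has_field_derivative Dw S f x * g x + f x * Dw S g x) (at x within S)"
    using Suc.prems unfolding Ck_on_Suc by (auto intro!: derivative_eq_intros)
  then have Dw_mult: "\<forall>x\<in>S. Dw S f x * g x + f x * Dw S g x = Dw S (\<lambda>y. f y * g y) x"
    using Suc.prems(1) by (auto intro!: Dw_eqI[symmetric])
  have "Ck_on S k f" "Ck_on S k g" "Ck_on S k (Dw S f)" "Ck_on S k (Dw S g)"
    using Suc.prems Ck_on_Suc_imp unfolding Ck_on_Suc by auto
  then have "Ck_on S k (\<lambda>x. Dw S f x * g x + f x * Dw S g x)"
    using Suc by (simp add: Ck_on_add)
  then have "Ck_on S k (Dw S (\<lambda>y. f y * g y))"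
    using Ck_on_cong[OF Dw_mult] by blast
  then show ?case unfolding Ck_on_Suc using D Dw_mult by simp
qed

lemma Ck_on_inverse:
  "dense_in_itself S \<Longrightarrow> Ck_on S k g \<Longrightarrow> \<forall>x\<in>S. g x \<noteq> 0 \<Longrightarrow> Ck_on S k (\<lambda>y. 1 / g y)"
proof (induction k arbitrary: g)
  case 0
  then show ?case by (auto simp: Ck_on_0 intro!: continuous_on_divide)
next
  case (Suc k)
  have D: "\<forall>x\<in>S. ((\<lambda>y. 1 / g y) has_field_derivative - Dw S g x * (1 / g x) * (1 / g x)) (at x within S)"
    using Suc.prems unfolding Ck_on_Suc
    by (auto intro!: derivative_eq_intros simp: power2_eq_square field_simps)
  then have Dw_inv: "\<forall>x\<in>S. - Dw S g x * (1 / g x) * (1 / g x) = Dw S (\<lambda>y. 1 / g y) x"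
    using Suc.prems(1) by (auto intro!: Dw_eqI[symmetric])
  have inv: "Ck_on S k (\<lambda>y. 1 / g y)" and Dg: "Ck_on S k (Dw S g)"
    using Suc Ck_on_Suc_imp unfolding Ck_on_Suc by auto
  have "Ck_on S k (\<lambda>y. - Dw S g y)"
    using Ck_on_mult[OF Suc.prems(1) Ck_on_const[OF Suc.prems(1), of k "-1"] Dg] by simp
  then have "Ck_on S k (\<lambda>x. - Dw S g x * (1 / g x) * (1 / g x))"
    using Ck_on_mult Suc.prems(1) inv by blast
  then have "Ck_on S k (Dw S (\<lambda>y. 1 / g y))"
    using Ck_on_cong[OF Dw_inv] by blast
  then show ?case unfolding Ck_on_Suc using D Dw_inv by simp
qed

lemma Ck_on_divide:
  "dense_in_itself S \<Longrightarrow> Ck_on S k f \<Longrightarrow> Ck_on S k g \<Longrightarrow> \<forall>x\<in>S. g x \<noteq> 0 \<Longrightarrow>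
    Ck_on S k (\<lambda>y. f y / g y)"
  using Ck_on_mult[OF _ _ Ck_on_inverse, of S k f g] by (simp add: divide_inverse)

lemma hderiv_add:
  "dense_in_itself S \<Longrightarrow> Ck_on S r f \<Longrightarrow> Ck_on S r g \<Longrightarrow> x \<in> S \<Longrightarrow>
    hderiv S r (\<lambda>y. f y + g y) x = hderiv S r f x + hderiv S r g x"
proof (induction r arbitrary: f g x)
  case 0
  then show ?case by simp
next
  case (Suc r)
  have "\<forall>x\<in>S. Dw S (\<lambda>y. f y + g y) x = Dw S f x + Dw S g x"
    using Suc.prems unfolding Ck_on_Suc by (auto intro!: Dw_eqI derivative_eq_intros)
  then have "hderiv S (Suc r) (\<lambda>y. f y + g y) x = hderiv S r (\<lambda>y. Dw S f y + Dw S g y) x"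
    unfolding hderiv_Suc_right using Suc.prems(4) by (rule hderiv_cong)
  also have "\<dots> = hderiv S r (Dw S f) x + hderiv S r (Dw S g) x"
    using Suc by (simp add: Ck_on_Suc)
  finally show ?case by (simp add: hderiv_Suc_right)
qed

lemma Leibniz_sum_Suc:
  fixes a b :: "nat \<Rightarrow> real"
  shows "(\<Sum>s\<le>r. of_nat (r choose s) * a (Suc r - s) * b s)
       + (\<Sum>s\<le>r. of_nat (r choose s) * a (r - s) * b (Suc s))
     = (\<Sum>s\<le>Suc r. of_nat (Suc r choose s) * a (Suc r - s) * b s)"
proof -
  have "(\<Sum>s\<le>r. of_nat (r choose s) * a (Suc r - s) * b s)
      = a (Suc r) * b 0 + (\<Sum>s<r. of_nat (r choose Suc s) * a (r - s) * b (Suc s))"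
  proof (cases r)
    case (Suc r')
    then show ?thesis
      by (simp only: sum.atMost_Suc_shift lessThan_Suc_atMost) simp
  qed simp
  moreover have "(\<Sum>s\<le>r. of_nat (r choose Suc s) * a (r - s) * b (Suc s))
      = (\<Sum>s<r. of_nat (r choose Suc s) * a (r - s) * b (Suc s))"
    by (simp add: lessThan_Suc_atMost[symmetric])
  ultimately have shift: "(\<Sum>s\<le>r. of_nat (r choose s) * a (Suc r - s) * b s)
      = a (Suc r) * b 0 + (\<Sum>s\<le>r. of_nat (r choose Suc s) * a (r - s) * b (Suc s))"
    by simp
  have "(\<Sum>s\<le>Suc r. of_nat (Suc r choose s) * a (Suc r - s) * b s)
      = a (Suc r) * b 0 + (\<Sum>s\<le>r. of_nat (Suc r choose Suc s) * a (r - s) * b (Suc s))"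
    by (subst sum.atMost_Suc_shift) simp
  also have "\<dots> = a (Suc r) * b 0 + (\<Sum>s\<le>r. of_nat (r choose Suc s) * a (r - s) * b (Suc s))
      + (\<Sum>s\<le>r. of_nat (r choose s) * a (r - s) * b (Suc s))"
    by (simp add: sum.distrib algebra_simps)
  finally show ?thesis by (simp add: shift)
qed

lemma hderiv_mult_Leibniz:
  "dense_in_itself S \<Longrightarrow> Ck_on S r f \<Longrightarrow> Ck_on S r g \<Longrightarrow> x \<in> S \<Longrightarrow>
    hderiv S r (\<lambda>y. g y * f y) x = (\<Sum>s\<le>r. of_nat (r choose s) * hderiv S (r - s) g x * hderiv S s f x)"
proof (induction r arbitrary: f g x)
  case 0
  then show ?case by simp
next
  case (Suc r)
  have "\<forall>y\<in>S. Dw S (\<lambda>y. g y * f y) y = Dw S g y * f y + g y * Dw S f y"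
    using Suc.prems unfolding Ck_on_Suc by (auto intro!: Dw_eqI derivative_eq_intros)
  then have "hderiv S (Suc r) (\<lambda>y. g y * f y) x = hderiv S r (\<lambda>y. Dw S g y * f y + g y * Dw S f y) x"
    unfolding hderiv_Suc_right using Suc.prems(4) by (rule hderiv_cong)
  also have "\<dots> = hderiv S r (\<lambda>y. Dw S g y * f y) x + hderiv S r (\<lambda>y. g y * Dw S f y) x"
    using Suc.prems Ck_on_Suc_imp unfolding Ck_on_Suc by (intro hderiv_add) (auto intro: Ck_on_mult)
  also have "\<dots> = (\<Sum>s\<le>r. of_nat (r choose s) * hderiv S (r - s) (Dw S g) x * hderiv S s f x)
     + (\<Sum>s\<le>r. of_nat (r choose s) * hderiv S (r - s) g x * hderiv S s (Dw S f) x)"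
    using Suc.IH[of f "Dw S g" x] Suc.IH[of "Dw S f" g x] Suc.prems Ck_on_Suc_imp
    unfolding Ck_on_Suc by simp
  also have "\<dots> = (\<Sum>s\<le>r. of_nat (r choose s) * hderiv S (Suc r - s) g x * hderiv S s f x)
     + (\<Sum>s\<le>r. of_nat (r choose s) * hderiv S (r - s) g x * hderiv S (Suc s) f x)"
    by (intro arg_cong2[where f="(+)"] sum.cong) (auto simp: hderiv_Suc_right[symmetric] Suc_diff_le)
  also have "\<dots> = (\<Sum>s\<le>Suc r. of_nat (Suc r choose s) * hderiv S (Suc r - s) g x * hderiv S s f x)"
    by (rule Leibniz_sum_Suc)
  finally show ?case .
qed

section \<open>Wronski determinants\<close>

definition wronski_mat :: "real set \<Rightarrow> (nat \<Rightarrow> real \<Rightarrow> real) \<Rightarrow> nat \<Rightarrow> real \<Rightarrow> real mat" where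
  "wronski_mat S f m x = Matrix.mat m m (\<lambda>(r, c). hderiv S r (f c) x)"

definition wronski_det :: "real set \<Rightarrow> (nat \<Rightarrow> real \<Rightarrow> real) \<Rightarrow> nat \<Rightarrow> real \<Rightarrow> real" where
  "wronski_det S f m x = Determinant.det (wronski_mat S f m x)"

lemma wronskian_eq_wronski_det: "wronskian S \<phi> i x = wronski_det S (\<lambda>c. \<phi> (Suc c)) i x"
proof -
  have "(\<Prod>r<i. hderiv S r (\<phi> (Suc (p r))) x)
      = (\<Prod>r = 0..<i. wronski_mat S (\<lambda>c. \<phi> (Suc c)) i x $$ (r, p r))"
    if "p permutes {0..<i}" for p
    using that by (auto simp: wronski_mat_def atLeast0LessThan permutes_in_image intro!: prod.cong)
  then show ?thesis
    unfolding wronskian_def wronski_det_def det_def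
    by (auto simp: wronski_mat_def atLeast0LessThan intro!: sum.cong)
qed

lemma wronski_det_0: "wronski_det S f 0 x = 1"
  by (simp add: wronski_det_def wronski_mat_def)

lemma wronski_det_1 [simp]: "wronski_det S f (Suc 0) x = f 0 x"
proof -
  define A where "A = wronski_mat S f 1 x"
  have A: "A \<in> carrier_mat 1 1"
    by (simp add: A_def wronski_mat_def)
  have "Determinant.det A = A $$ (0, 0) * Determinant.det (mat_delete A 0 0)"
    using laplace_expansion_column[OF A, of 0] by (simp add: cofactor_def)
  also have "Determinant.det (mat_delete A 0 0) = 1"
    by (simp add: mat_delete_def A_def wronski_mat_def)
  finally show ?thesis by (simp add: wronski_det_def A_def wronski_mat_def)
qed

lemma wronski_det_cong:
  "\<forall>c<m. \<forall>y\<in>S. f c y = g c y \<Longrightarrow> x \<in> S \<Longrightarrow> wronski_det S f m x = wronski_det S g m x"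
  unfolding wronski_det_def wronski_mat_def
  by (intro arg_cong[where f = Determinant.det] eq_matI) (auto intro: hderiv_cong)

text \<open>By the Leibniz rule the Wronski matrix of the \<open>g f\<^sub>c\<close> is a lower triangular matrix with
  diagonal \<open>g x\<close> times the Wronski matrix of the \<open>f\<^sub>c\<close>.\<close>

lemma wronski_det_mult:
  assumes S: "dense_in_itself S" and g: "Ck_on S (m - 1) g" and f: "\<forall>c<m. Ck_on S (m - 1) (f c)"
    and x: "x \<in> S"
  shows "wronski_det S (\<lambda>c y. g y * f c y) m x = g x ^ m * wronski_det S f m x"
proof -
  define L where
    "L = Matrix.mat m m (\<lambda>(r, s). if s \<le> r then of_nat (r choose s) * hderiv S (r - s) g x else 0)"
  have L: "L \<in> carrier_mat m m"
    by (simp add: L_def)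
  have B: "wronski_mat S f m x \<in> carrier_mat m m"
    by (simp add: wronski_mat_def)
  have factor: "wronski_mat S (\<lambda>c y. g y * f c y) m x = L * wronski_mat S f m x"
  proof (rule eq_matI)
    fix r c
    assume "r < dim_row (L * wronski_mat S f m x)" "c < dim_col (L * wronski_mat S f m x)"
    then have r: "r < m" and c: "c < m"
      by (auto simp: L_def wronski_mat_def)
    have "(L * wronski_mat S f m x) $$ (r, c)
        = (\<Sum>s\<in>{0..<m}. if s \<le> r then of_nat (r choose s) * hderiv S (r - s) g x * hderiv S s (f c) x else 0)"
      using r c by (auto simp: L_def wronski_mat_def scalar_prod_def intro!: sum.cong)
    also have "\<dots> = (\<Sum>s\<in>{s\<in>{0..<m}. s \<le> r}. of_nat (r choose s) * hderiv S (r - s) g x * hderiv S s (f c) x)"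
      by (rule sum.inter_filter[symmetric]) simp
    also have "{s\<in>{0..<m}. s \<le> r} = {..r}"
      using r by auto
    also have "(\<Sum>s\<le>r. of_nat (r choose s) * hderiv S (r - s) g x * hderiv S s (f c) x)
        = hderiv S r (\<lambda>y. g y * f c y) x"
      using r c g f Ck_on_mono[of r "m - 1" S] by (intro hderiv_mult_Leibniz[symmetric] S x) auto
    finally show "wronski_mat S (\<lambda>c y. g y * f c y) m x $$ (r, c) = (L * wronski_mat S f m x) $$ (r, c)"
      using r c by (simp add: wronski_mat_def)
  qed (auto simp: L_def wronski_mat_def)
  have "Determinant.det L = prod_list (diag_mat L)"
    by (rule det_lower_triangular[OF _ L]) (auto simp: L_def)
  also have "\<dots> = g x ^ m"
    by (simp add: prod_list_diag_prod L_def)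
  finally show ?thesis
    unfolding wronski_det_def factor det_mult[OF L B] by simp
qed

lemma wronski_det_first_one:
  assumes S: "dense_in_itself S" and f0: "\<forall>y\<in>S. f 0 y = 1" and x: "x \<in> S"
  shows "wronski_det S f (Suc m) x = wronski_det S (\<lambda>c. Dw S (f (Suc c))) m x"
proof -
  define A where "A = wronski_mat S f (Suc m) x"
  have A: "A \<in> carrier_mat (Suc m) (Suc m)"
    by (simp add: A_def wronski_mat_def)
  have col0: "A $$ (i, 0) = (if i = 0 then 1 else 0)" if "i < Suc m" for i
  proof -
    have "A $$ (i, 0) = hderiv S i (f 0) x"
      using that by (simp add: A_def wronski_mat_def)
    also have "\<dots> = hderiv S i (\<lambda>_. 1) x"
      using f0 x by (intro hderiv_cong) auto
    finally show ?thesis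
      using hderiv_const[OF S x] by simp
  qed
  have "Determinant.det A = (\<Sum>i<Suc m. A $$ (i, 0) * cofactor A i 0)"
    using laplace_expansion_column[OF A, of 0] by simp
  also have "\<dots> = (\<Sum>i<Suc m. if i = 0 then cofactor A 0 0 else 0)"
    by (intro sum.cong) (auto simp: col0)
  also have "\<dots> = Determinant.det (mat_delete A 0 0)"
    by (simp add: cofactor_def)
  also have "mat_delete A 0 0 = wronski_mat S (\<lambda>c. Dw S (f (Suc c))) m x"
    by (rule eq_matI) (auto simp: mat_delete_def A_def wronski_mat_def hderiv_Suc_right)
  finally show ?thesis
    by (simp add: wronski_det_def A_def)
qed

lemma wronski_det_divide_first:
  assumes S: "dense_in_itself S" and F: "\<forall>c\<le>m. Ck_on S m (F c)" and nz: "\<forall>y\<in>S. F 0 y \<noteq> 0"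
    and x: "x \<in> S"
  shows "wronski_det S F (Suc m) x
       = F 0 x ^ Suc m * wronski_det S (\<lambda>c. Dw S (\<lambda>y. F (Suc c) y / F 0 y)) m x"
proof -
  have "wronski_det S F (Suc m) x = wronski_det S (\<lambda>c y. F 0 y * (F c y / F 0 y)) (Suc m) x"
    using nz x by (intro wronski_det_cong) auto
  also have "\<dots> = F 0 x ^ Suc m * wronski_det S (\<lambda>c y. F c y / F 0 y) (Suc m) x"
    using F nz by (intro wronski_det_mult S x) (auto intro: Ck_on_divide S)
  also have "wronski_det S (\<lambda>c y. F c y / F 0 y) (Suc m) x
      = wronski_det S (\<lambda>c. Dw S (\<lambda>y. F (Suc c) y / F 0 y)) m x"
    using nz x by (intro wronski_det_first_one S) auto
  finally show ?thesis .
qed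

section \<open>Behaviour as \<open>x \<rightarrow> x\<^sub>0\<^sup>-\<close>\<close>

lemma eventually_left_filter:
  assumes "x0 \<noteq> -\<infinity>"
  shows "eventually P (left_filter x0) \<longleftrightarrow> (\<exists>c. ereal c < x0 \<and> (\<forall>y. c < y \<and> ereal y < x0 \<longrightarrow> P y))"
  using assms
  by (cases x0) (auto simp: left_filter_def eventually_at_left_field eventually_at_top_dense)

lemma eventually_left_filterI:
  assumes "ereal c < x0" "\<And>y. c < y \<Longrightarrow> ereal y < x0 \<Longrightarrow> P y"
  shows "eventually P (left_filter x0)"
proof -
  have "x0 \<noteq> -\<infinity>"
    using assms(1) by auto
  then show ?thesis
    using assms eventually_left_filter by blast
qed

lemma left_filter_ne_bot: "left_filter x0 \<noteq> bot"
  by (simp add: left_filter_def)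

lemma lhopital_left_filter:
  fixes f g f' g' :: "real \<Rightarrow> real"
  assumes f0: "(f \<longlongrightarrow> 0) (left_filter x0)" and g0: "(g \<longlongrightarrow> 0) (left_filter x0)"
    and gnz: "eventually (\<lambda>y. g y \<noteq> 0) (left_filter x0)"
    and g'nz: "eventually (\<lambda>y. g' y \<noteq> 0) (left_filter x0)"
    and Df: "eventually (\<lambda>y. DERIV f y :> f' y) (left_filter x0)"
    and Dg: "eventually (\<lambda>y. DERIV g y :> g' y) (left_filter x0)"
    and lim: "filterlim (\<lambda>y. f' y / g' y) G (left_filter x0)"
  shows "filterlim (\<lambda>y. f y / g y) G (left_filter x0)"
proof (cases "x0 = \<infinity>")
  case False
  then show ?thesis
    using lhopital_left assms by (simp add: left_filter_def)
next
  case True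
  then have F: "left_filter x0 = at_top"
    by (simp add: left_filter_def)
  show ?thesis unfolding F filterlim_at_top_to_right
  proof (rule lhopital_right_0)
    let ?D = "\<lambda>f' x. f' (inverse x) * - (inverse x ^ Suc (Suc 0))"
    show "((\<lambda>x. f (inverse x)) \<longlongrightarrow> 0) (at_right 0)"
      using f0 unfolding F filterlim_at_top_to_right .
    show "((\<lambda>x. g (inverse x)) \<longlongrightarrow> 0) (at_right 0)"
      using g0 unfolding F filterlim_at_top_to_right .
    show "eventually (\<lambda>x. g (inverse x) \<noteq> 0) (at_right 0)"
      using gnz unfolding F eventually_at_top_to_right .
    show "eventually (\<lambda>x. DERIV (\<lambda>x. g (inverse x)) x :> ?D g' x) (at_right 0)"
      unfolding eventually_at_right_to_top
      using Dg[unfolded F] eventually_ge_at_top[where c=1]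
      by eventually_elim (rule derivative_eq_intros DERIV_chain'[where f=inverse] | simp)+
    show "eventually (\<lambda>x. DERIV (\<lambda>x. f (inverse x)) x :> ?D f' x) (at_right 0)"
      unfolding eventually_at_right_to_top
      using Df[unfolded F] eventually_ge_at_top[where c=1]
      by eventually_elim (rule derivative_eq_intros DERIV_chain'[where f=inverse] | simp)+
    show "eventually (\<lambda>x. ?D g' x \<noteq> 0) (at_right 0)"
      unfolding eventually_at_right_to_top
      using g'nz[unfolded F] eventually_ge_at_top[where c=1]
      by eventually_elim auto
    have "eventually (\<lambda>x. f' x / g' x = ?D f' (inverse x) / ?D g' (inverse x)) at_top"
      using eventually_ge_at_top[where c=1] by eventually_elim simp
    then show "filterlim (\<lambda>x. ?D f' x / ?D g' x) G (at_right 0)"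
      unfolding filterlim_at_right_to_top using lim[unfolded F] filterlim_cong by fastforce
  qed
qed

lemma continuous_nonzero_sign_const:
  fixes f :: "real \<Rightarrow> real"
  assumes A: "\<And>a b z. a \<in> A \<Longrightarrow> b \<in> A \<Longrightarrow> a \<le> z \<Longrightarrow> z \<le> b \<Longrightarrow> z \<in> A"
    and cont: "\<forall>y\<in>A. isCont f y" and nz: "\<forall>y\<in>A. f y \<noteq> 0"
  shows "(\<forall>y\<in>A. f y > 0) \<or> (\<forall>y\<in>A. f y < 0)"
proof (rule ccontr)
  assume "\<not> ?thesis"
  then obtain p q where pq: "p \<in> A" "q \<in> A" "f p \<le> 0" "f q \<ge> 0"
    by force
  have cont_between: "\<forall>x. a \<le> x \<and> x \<le> b \<longrightarrow> isCont f x" if "a \<in> A" "b \<in> A" for a b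
    using A cont that by blast
  obtain z where "z \<in> A" "f z = 0"
  proof (cases "p \<le> q")
    case True
    then obtain z where "p \<le> z" "z \<le> q" "f z = 0"
      using IVT[of f p 0 q] pq cont_between[OF pq(1,2)] by blast
    then show ?thesis
      using that A[OF pq(1,2)] by blast
  next
    case False
    then obtain z where "q \<le> z" "z \<le> p" "f z = 0"
      using IVT2[of f p 0 q] pq cont_between[OF pq(2,1)] by force
    then show ?thesis
      using that A[OF pq(2,1)] by blast
  qed
  then show False
    using nz by auto
qed

lemma strict_mono_left_filter:
  fixes h :: "real \<Rightarrow> real"
  assumes c: "ereal c < x0"
    and mono: "\<And>a b. c < a \<Longrightarrow> a < b \<Longrightarrow> ereal b < x0 \<Longrightarrow> h a < h b"
  shows "eventually (\<lambda>y. h y \<noteq> 0) (left_filter x0)"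
    and "((\<lambda>y. ereal (h y)) \<longlongrightarrow> (SUP y\<in>{y. c < y \<and> ereal y < x0}. ereal (h y))) (left_filter x0)"
proof -
  let ?A = "{y. c < y \<and> ereal y < x0}"
  show "eventually (\<lambda>y. h y \<noteq> 0) (left_filter x0)"
  proof (cases "\<exists>z\<in>?A. h z = 0")
    case True
    then obtain z where z: "c < z" "ereal z < x0" "h z = 0"
      by auto
    show ?thesis
      by (rule eventually_left_filterI[OF z(2)]) (use mono z in force)
  next
    case False
    then show ?thesis
      by (intro eventually_left_filterI[OF c]) auto
  qed
  show "((\<lambda>y. ereal (h y)) \<longlongrightarrow> (SUP y\<in>?A. ereal (h y))) (left_filter x0)"
  proof (rule order_tendstoI)
    fix a
    assume "a < (SUP y\<in>?A. ereal (h y))"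
    then obtain y0 where y0: "y0 \<in> ?A" "a < ereal (h y0)"
      unfolding less_SUP_iff by blast
    show "eventually (\<lambda>y. a < ereal (h y)) (left_filter x0)"
    proof (rule eventually_left_filterI)
      show "ereal y0 < x0"
        using y0 by auto
      fix y
      assume "y0 < y" "ereal y < x0"
      then have "ereal (h y0) < ereal (h y)"
        using mono y0 by auto
      then show "a < ereal (h y)"
        using y0(2) by (rule less_trans[rotated])
    qed
  next
    fix a
    assume "(SUP y\<in>?A. ereal (h y)) < a"
    show "eventually (\<lambda>y. ereal (h y) < a) (left_filter x0)"
    proof (rule eventually_left_filterI[OF c])
      fix y
      assume "c < y" "ereal y < x0"
      then have "ereal (h y) \<le> (SUP y\<in>?A. ereal (h y))"
        by (intro SUP_upper) auto
      then show "ereal (h y) < a"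
        using \<open>(SUP y\<in>?A. ereal (h y)) < a\<close> by simp
    qed
  qed
qed

text \<open>Continuity of \<open>h'\<close> gives it a constant sign near \<open>x\<^sub>0\<close>, so \<open>h\<close> is eventually strictly
  monotone.\<close>

lemma deriv_nonzero_left_filter:
  fixes h h' :: "real \<Rightarrow> real"
  assumes x0: "x0 \<noteq> -\<infinity>"
    and ev: "eventually (\<lambda>y. DERIV h y :> h' y \<and> isCont h' y \<and> h' y \<noteq> 0) (left_filter x0)"
  shows "eventually (\<lambda>y. h y \<noteq> 0) (left_filter x0)"
    and "\<exists>L. ((\<lambda>y. ereal (h y)) \<longlongrightarrow> L) (left_filter x0)"
proof -
  obtain c where c: "ereal c < x0"
    and P: "\<And>y. c < y \<Longrightarrow> ereal y < x0 \<Longrightarrow> DERIV h y :> h' y \<and> isCont h' y \<and> h' y \<noteq> 0"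
    using ev unfolding eventually_left_filter[OF x0] by blast
  let ?A = "{y. c < y \<and> ereal y < x0}"
  have between: "z \<in> ?A" if "c < a" "a \<le> z" "z \<le> b" "ereal b < x0" for a b z
    using that by (auto intro: le_less_trans[of "ereal z" "ereal b"])
  have sign: "(\<forall>y\<in>?A. h' y > 0) \<or> (\<forall>y\<in>?A. h' y < 0)"
    using P between by (intro continuous_nonzero_sign_const) auto
  obtain s :: real where s: "s = 1 \<or> s = -1" and pos: "\<forall>y\<in>?A. s * h' y > 0"
  proof (cases "\<forall>y\<in>?A. h' y > 0")
    case True
    then show ?thesis
      using that[of 1] by simp
  next
    case False
    then show ?thesis
      using that[of "-1"] sign by auto
  qed
  have increasing: "s * h a < s * h b" if "c < a" "a < b" "ereal b < x0" for a b
  proof (rule DERIV_pos_imp_increasing[OF that(2)])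
    fix x
    assume "a \<le> x" "x \<le> b"
    then have "x \<in> ?A"
      using between that by blast
    then show "\<exists>y. DERIV (\<lambda>x. s * h x) x :> y \<and> 0 < y"
      using P pos by (intro exI[of _ "s * h' x"]) (auto intro!: DERIV_cmult)
  qed
  have "eventually (\<lambda>y. s * h y \<noteq> 0) (left_filter x0)"
    using increasing by (rule strict_mono_left_filter(1)[OF c])
  then show "eventually (\<lambda>y. h y \<noteq> 0) (left_filter x0)"
    by eventually_elim simp
  have "((\<lambda>y. ereal (s * h y)) \<longlongrightarrow> (SUP y\<in>?A. ereal (s * h y))) (left_filter x0)"
    using increasing by (rule strict_mono_left_filter(2)[OF c])
  then have "((\<lambda>y. ereal s * ereal (s * h y)) \<longlongrightarrow> ereal s * (SUP y\<in>?A. ereal (s * h y))) (left_filter x0)"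
    using s by (intro tendsto_cmult_ereal) auto
  moreover have "(\<lambda>y. ereal s * ereal (s * h y)) = (\<lambda>y. ereal (h y))"
    using s by auto
  ultimately show "\<exists>L. ((\<lambda>y. ereal (h y)) \<longlongrightarrow> L) (left_filter x0)"
    by metis
qed

lemma dominates_trans:
  assumes "dominates F f g" "dominates F g h" "eventually (\<lambda>x. g x \<noteq> 0) F"
  shows "dominates F f h"
proof -
  have ev: "eventually (\<lambda>x. h x / g x * (g x / f x) = h x / f x) F"
    using assms(3) by eventually_elim simp
  have "((\<lambda>x. h x / g x * (g x / f x)) \<longlongrightarrow> 0 * 0) F"
    using assms(1,2) unfolding dominates_def by (intro tendsto_mult)
  then show ?thesis
    unfolding dominates_def tendsto_cong[OF ev] by simp
qed

lemma dense_in_itself_lint: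
  assumes "ereal T < x0"
  shows "dense_in_itself (lint T x0)"
  unfolding dense_in_itself_def
proof
  fix x
  assume x: "x \<in> lint T x0"
  then have "ereal x < x0"
    by (simp add: lint_def)
  then obtain z where z: "ereal x < z" "z < x0"
    using dense by blast
  then obtain b where b: "x < b" "ereal b < x0"
    by (cases z) auto
  then have "{x..b} \<subseteq> lint T x0"
    using x by (auto simp: lint_def intro: le_less_trans[of "ereal _" "ereal b"])
  then have "at_right x \<le> at x within lint T x0"
    using b at_le at_within_Icc_at_right by metis
  then show "at x within lint T x0 \<noteq> bot"
    using trivial_limit_at_right_real bot.extremum_uniqueI by metis
qed

lemma eventually_interior_lint:
  assumes "ereal T < x0"
  shows "eventually (\<lambda>y. y \<in> interior (lint T x0)) (left_filter x0)"
proof (rule eventually_left_filterI[OF assms])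
  fix y
  assume y: "T < y" "ereal y < x0"
  have "open ({T<..} \<inter> ereal -` {..<x0})"
    by (intro open_Int open_greaterThan open_ereal_vimage open_lessThan)
  moreover have "{T<..} \<inter> ereal -` {..<x0} \<subseteq> lint T x0"
    by (auto simp: lint_def)
  ultimately show "y \<in> interior (lint T x0)"
    using y by (intro interiorI) auto
qed

section \<open>The reduced functions \<open>\<psi>\<^sup>(\<^sup>k\<^sup>)\<^sub>j\<close> and \<open>U\<^sub>k\<close>\<close>

lemma psi_1 [simp]: "psi S \<phi> 1 j = \<phi> j"
  by (simp add: One_nat_def)

lemma psi_Suc: "1 \<le> k \<Longrightarrow> psi S \<phi> (Suc k) j = Dw S (\<lambda>y. psi S \<phi> k j y / psi S \<phi> k k y)"
  by (cases k) auto

lemma Ufun_1 [simp]: "Ufun S \<phi> u 1 = u"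
  by (simp add: One_nat_def)

lemma Ufun_Suc: "1 \<le> k \<Longrightarrow> Ufun S \<phi> u (Suc k) = Dw S (\<lambda>y. Ufun S \<phi> u k y / psi S \<phi> k k y)"
  by (cases k) auto

lemma prod_power_Suc_diff:
  fixes p :: "nat \<Rightarrow> real"
  shows "(\<Prod>i\<in>{1..Suc k}. p i ^ (Suc (Suc k) - i)) = (\<Prod>i\<in>{1..k}. p i ^ (Suc k - i)) * (\<Prod>i\<in>{1..Suc k}. p i)"
proof -
  have "(\<Prod>i\<in>{1..Suc k}. p i ^ (Suc (Suc k) - i)) = (\<Prod>i\<in>{1..Suc k}. p i ^ (Suc k - i) * p i)"
    by (intro prod.cong) (auto simp: Suc_diff_le)
  also have "\<dots> = (\<Prod>i\<in>{1..Suc k}. p i ^ (Suc k - i)) * (\<Prod>i\<in>{1..Suc k}. p i)"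
    by (simp add: prod.distrib)
  also have "(\<Prod>i\<in>{1..Suc k}. p i ^ (Suc k - i)) = (\<Prod>i\<in>{1..k}. p i ^ (Suc k - i))"
    by (simp add: atLeastAtMostSuc_conv)
  finally show ?thesis .
qed

locale positive_wronskian_system =
  fixes T :: real and x0 :: ereal and n :: nat and \<phi> :: "nat \<Rightarrow> real \<Rightarrow> real" and S :: "real set"
  assumes S_def: "S = lint T x0"
    and T_less: "ereal T < x0"
    and n_pos: "1 \<le> n"
    and smooth: "\<forall>i\<in>{1..n}. Ck_on S (n - 1) (\<phi> i)"
    and wronskian_pos: "\<forall>i\<in>{1..n}. \<forall>x\<in>S. wronskian S \<phi> i x > 0"
begin

abbreviation \<psi> :: "nat \<Rightarrow> nat \<Rightarrow> real \<Rightarrow> real" where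
  "\<psi> \<equiv> psi S \<phi>"

lemma dense_S: "dense_in_itself S"
  using dense_in_itself_lint[OF T_less] by (simp add: S_def)

lemma psi_smooth_and_wronskian_factor:
  "1 \<le> k \<Longrightarrow> k \<le> n \<Longrightarrow> (\<forall>j\<in>{k..n}. Ck_on S (n - k) (\<psi> k j)) \<and>
    (\<forall>m x. k + m \<le> Suc n \<longrightarrow> x \<in> S \<longrightarrow> wronskian S \<phi> (k - 1 + m) x =
      (\<Prod>i\<in>{1..<k}. \<psi> i i x ^ (k + m - i)) * wronski_det S (\<lambda>c. \<psi> k (k + c)) m x)"
proof (induction k rule: nat_induct_at_least)
  case base
  show ?case
    using smooth by (auto simp: wronskian_eq_wronski_det)
next
  case (Suc k)
  then have k: "1 \<le> k" "Suc k \<le> n"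
    by auto
  from Suc.IH k have IH_smooth: "\<forall>j\<in>{k..n}. Ck_on S (n - k) (\<psi> k j)"
    and IH_factor: "\<And>m x. k + m \<le> Suc n \<Longrightarrow> x \<in> S \<Longrightarrow> wronskian S \<phi> (k - 1 + m) x =
      (\<Prod>i\<in>{1..<k}. \<psi> i i x ^ (k + m - i)) * wronski_det S (\<lambda>c. \<psi> k (k + c)) m x"
    by auto
  have nz: "\<psi> k k x \<noteq> 0" if "x \<in> S" for x
  proof -
    have "wronskian S \<phi> k x = (\<Prod>i\<in>{1..<k}. \<psi> i i x ^ (k + 1 - i)) * \<psi> k k x"
      using IH_factor[of 1 x] that k by simp
    moreover have "wronskian S \<phi> k x > 0"
      using wronskian_pos that k by auto
    ultimately show ?thesis
      by auto
  qed
  have "Ck_on S (n - Suc k) (\<psi> (Suc k) j)" if "j \<in> {Suc k..n}" for j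
  proof -
    have "Ck_on S (Suc (n - Suc k)) (\<lambda>y. \<psi> k j y / \<psi> k k y)"
      using Ck_on_divide[OF dense_S] IH_smooth that nz k by (auto simp: Suc_diff_Suc)
    then show ?thesis
      using k by (simp add: psi_Suc Ck_on_Dw)
  qed
  moreover have "wronskian S \<phi> (Suc k - 1 + m) x =
      (\<Prod>i\<in>{1..<Suc k}. \<psi> i i x ^ (Suc k + m - i)) * wronski_det S (\<lambda>c. \<psi> (Suc k) (Suc k + c)) m x"
    if m: "Suc k + m \<le> Suc n" and x: "x \<in> S" for m x
  proof -
    have "\<forall>c\<le>m. Ck_on S m (\<psi> k (k + c))"
      using IH_smooth m Ck_on_mono[of m "n - k"] by auto
    then have "wronski_det S (\<lambda>c. \<psi> k (k + c)) (Suc m) x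
        = \<psi> k k x ^ Suc m * wronski_det S (\<lambda>c. Dw S (\<lambda>y. \<psi> k (k + Suc c) y / \<psi> k k y)) m x"
      using nz x wronski_det_divide_first[OF dense_S, of m "\<lambda>c. \<psi> k (k + c)" x] by simp
    also have "(\<lambda>c. Dw S (\<lambda>y. \<psi> k (k + Suc c) y / \<psi> k k y)) = (\<lambda>c. \<psi> (Suc k) (Suc k + c))"
      using k by (simp add: psi_Suc)
    finally have divided: "wronski_det S (\<lambda>c. \<psi> k (k + c)) (Suc m) x
        = \<psi> k k x ^ Suc m * wronski_det S (\<lambda>c. \<psi> (Suc k) (Suc k + c)) m x" .
    have "wronskian S \<phi> (Suc k - 1 + m) x = wronskian S \<phi> (k - 1 + Suc m) x"
      using k by simp
    also have "\<dots> = (\<Prod>i\<in>{1..<k}. \<psi> i i x ^ (k + Suc m - i)) * wronski_det S (\<lambda>c. \<psi> k (k + c)) (Suc m) x"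
      using IH_factor[of "Suc m" x] m x by simp
    also have "\<dots> = ((\<Prod>i\<in>{1..<k}. \<psi> i i x ^ (Suc k + m - i)) * \<psi> k k x ^ (Suc k + m - k))
        * wronski_det S (\<lambda>c. \<psi> (Suc k) (Suc k + c)) m x"
      by (simp add: divided)
    also have "(\<Prod>i\<in>{1..<k}. \<psi> i i x ^ (Suc k + m - i)) * \<psi> k k x ^ (Suc k + m - k)
        = (\<Prod>i\<in>{1..<Suc k}. \<psi> i i x ^ (Suc k + m - i))"
      using k by (simp add: prod.atLeastLessThan_Suc)
    finally show ?thesis .
  qed
  ultimately show ?case
    by blast
qed

lemma psi_smooth: "k \<in> {1..n} \<Longrightarrow> j \<in> {k..n} \<Longrightarrow> Ck_on S (n - k) (\<psi> k j)"
  using psi_smooth_and_wronskian_factor[of k] by auto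

lemma wronskian_eq_prod_psi_diag:
  assumes k: "k \<in> {1..n}" and x: "x \<in> S"
  shows "wronskian S \<phi> k x = (\<Prod>i\<in>{1..k}. \<psi> i i x ^ (Suc k - i))"
proof -
  have "\<forall>m x. k + m \<le> Suc n \<longrightarrow> x \<in> S \<longrightarrow> wronskian S \<phi> (k - 1 + m) x =
      (\<Prod>i\<in>{1..<k}. \<psi> i i x ^ (k + m - i)) * wronski_det S (\<lambda>c. \<psi> k (k + c)) m x"
    using psi_smooth_and_wronskian_factor[of k] k by auto
  then have "wronskian S \<phi> k x = (\<Prod>i\<in>{1..<k}. \<psi> i i x ^ (Suc k - i)) * \<psi> k k x"
    using k x by (auto dest: spec[of _ 1])
  also have "\<dots> = (\<Prod>i\<in>{1..k}. \<psi> i i x ^ (Suc k - i))"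
    using k by (simp add: atLeastLessThanSuc_atLeastAtMost[symmetric] prod.atLeastLessThan_Suc)
  finally show ?thesis .
qed

lemma psi_diag_nonzero:
  assumes k: "k \<in> {1..n}" and x: "x \<in> S"
  shows "\<psi> k k x \<noteq> 0"
proof
  assume "\<psi> k k x = 0"
  then have "wronskian S \<phi> k x = 0"
    using wronskian_eq_prod_psi_diag[OF k x] k by (auto simp: prod_zero_iff intro!: bexI[of _ k])
  then show False
    using wronskian_pos k x by fastforce
qed

lemma wronskian_pos_le: "k \<le> n \<Longrightarrow> x \<in> S \<Longrightarrow> wronskian S \<phi> k x > 0"
  using wronskian_pos by (cases "k = 0") (auto simp: wronskian_eq_wronski_det wronski_det_0)

lemma wronskian_Suc_eq:
  assumes k: "Suc k \<le> n" and x: "x \<in> S"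
  shows "wronskian S \<phi> (Suc k) x = wronskian S \<phi> k x * (\<Prod>i\<in>{1..Suc k}. \<psi> i i x)"
proof -
  have "wronskian S \<phi> (Suc k) x = (\<Prod>i\<in>{1..Suc k}. \<psi> i i x ^ (Suc (Suc k) - i))"
    using k x by (intro wronskian_eq_prod_psi_diag) auto
  also have "\<dots> = (\<Prod>i\<in>{1..k}. \<psi> i i x ^ (Suc k - i)) * (\<Prod>i\<in>{1..Suc k}. \<psi> i i x)"
    by (rule prod_power_Suc_diff)
  also have "(\<Prod>i\<in>{1..k}. \<psi> i i x ^ (Suc k - i)) = wronskian S \<phi> k x"
    using wronskian_eq_prod_psi_diag[of k x] k x
    by (cases "k = 0") (auto simp: wronskian_eq_wronski_det wronski_det_0)
  finally show ?thesis .
qed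

lemma inverse_psi_diag_eq_qfun:
  assumes k: "k \<in> {1..n}" and x: "x \<in> S"
  shows "1 / \<psi> k k x = qfun S \<phi> n (k - 1) x"
proof (cases "k = 1")
  case True
  have "\<phi> 1 x > 0"
    using wronskian_pos x n_pos by (force simp: wronskian_eq_wronski_det)
  then show ?thesis
    using True by (simp add: qfun_def)
next
  case False
  then obtain j where j: "k = Suc (Suc j)"
    using k by (metis One_nat_def atLeastAtMost_iff not0_implies_Suc not_one_le_zero)
  define W0 W1 W2 where "W0 = wronskian S \<phi> j x" and "W1 = wronskian S \<phi> (Suc j) x"
    and "W2 = wronskian S \<phi> (Suc (Suc j)) x"
  define Q where "Q = (\<Prod>i\<in>{1..Suc j}. \<psi> i i x)"
  have pos: "W0 > 0" "W1 > 0" "W2 > 0"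
    using wronskian_pos_le k x j by (auto simp: W0_def W1_def W2_def)
  have W1: "W1 = W0 * Q"
    using wronskian_Suc_eq[of j x] k j x by (simp add: W0_def W1_def Q_def)
  have W2: "W2 = W1 * (Q * \<psi> k k x)"
    using wronskian_Suc_eq[of "Suc j" x] k j x
    by (simp add: W1_def W2_def Q_def atLeastAtMostSuc_conv mult.commute)
  have q: "qfun S \<phi> n (k - 1) x = W1\<^sup>2 / (W0 * W2)"
    using k j pos by (simp add: qfun_def W0_def W1_def W2_def Let_def)
  have "Q \<noteq> 0" "\<psi> k k x \<noteq> 0"
    using pos W1 W2 by auto
  then show ?thesis
    unfolding q using pos W1 W2 by (simp add: field_simps power2_eq_square)
qed

lemma psi_quotient_has_derivative:
  assumes "k \<in> {1..<n}" "j \<in> {k..n}" "x \<in> S"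
  shows "((\<lambda>y. \<psi> k j y / \<psi> k k y) has_field_derivative \<psi> (Suc k) j x) (at x within S)"
proof -
  have "Ck_on S (Suc (n - Suc k)) (\<lambda>y. \<psi> k j y / \<psi> k k y)"
    using Ck_on_divide[OF dense_S psi_smooth psi_smooth] psi_diag_nonzero assms
    by (auto simp: Suc_diff_Suc)
  then show ?thesis
    using assms by (auto simp: Ck_on_Suc psi_Suc)
qed

lemma psi_Suc_self_zero: "k \<in> {1..n} \<Longrightarrow> x \<in> S \<Longrightarrow> \<psi> (Suc k) k x = 0"
proof -
  assume k: "k \<in> {1..n}" and x: "x \<in> S"
  have "\<psi> (Suc k) k x = Dw S (\<lambda>_. 1) x"
    using k x psi_diag_nonzero by (auto simp: psi_Suc intro!: Dw_cong)
  also have "\<dots> = 0"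
    using dense_S x by (auto intro!: Dw_eqI)
  finally show ?thesis .
qed

lemma sum_psi_quotient_has_derivative:
  assumes k: "k \<in> {1..<n}" and x: "x \<in> S"
  shows "((\<lambda>y. \<Sum>j=k..n. a j * (\<psi> k j y / \<psi> k k y)) has_field_derivative
      (\<Sum>j=Suc k..n. a j * \<psi> (Suc k) j x)) (at x within S)"
proof -
  have "((\<lambda>y. \<Sum>j=k..n. a j * (\<psi> k j y / \<psi> k k y)) has_field_derivative
      (\<Sum>j=k..n. a j * \<psi> (Suc k) j x)) (at x within S)"
    using psi_quotient_has_derivative[OF k _ x] by (intro DERIV_sum DERIV_cmult) auto
  moreover have "(\<Sum>j=k..n. a j * \<psi> (Suc k) j x) = (\<Sum>j=Suc k..n. a j * \<psi> (Suc k) j x)"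
    using psi_Suc_self_zero[of k x] k x by (simp add: sum.atLeast_Suc_atMost)
  ultimately show ?thesis
    by simp
qed

context
  fixes a :: "nat \<Rightarrow> real" and u :: "real \<Rightarrow> real"
  assumes u_def: "u = (\<lambda>x. \<Sum>j=1..n. a j * \<phi> j x)"
begin

lemma Ufun_eq_sum: "1 \<le> k \<Longrightarrow> k \<le> n \<Longrightarrow> \<forall>x\<in>S. Ufun S \<phi> u k x = (\<Sum>j=k..n. a j * \<psi> k j x)"
proof (induction k rule: nat_induct_at_least)
  case base
  then show ?case by (simp add: u_def)
next
  case (Suc k)
  then have k: "k \<in> {1..<n}"
    by auto
  show ?case
  proof
    fix x
    assume x: "x \<in> S"
    have "\<forall>y\<in>S. Ufun S \<phi> u k y / \<psi> k k y = (\<Sum>j=k..n. a j * (\<psi> k j y / \<psi> k k y))"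
      using Suc by (simp add: sum_divide_distrib)
    then have "Ufun S \<phi> u (Suc k) x = Dw S (\<lambda>y. \<Sum>j=k..n. a j * (\<psi> k j y / \<psi> k k y)) x"
      using k x by (auto simp: Ufun_Suc intro!: Dw_cong)
    also have "\<dots> = (\<Sum>j=Suc k..n. a j * \<psi> (Suc k) j x)"
      using Dw_eqI[OF dense_S x sum_psi_quotient_has_derivative[OF k x]] .
    finally show "Ufun S \<phi> u (Suc k) x = (\<Sum>j=Suc k..n. a j * \<psi> (Suc k) j x)" .
  qed
qed

lemma Ufun_quotient_eq_sum:
  assumes "k \<in> {1..n}" "y \<in> S"
  shows "Ufun S \<phi> u k y / \<psi> k k y = (\<Sum>j=k..n. a j * (\<psi> k j y / \<psi> k k y))"
proof -
  have "Ufun S \<phi> u k y = (\<Sum>j=k..n. a j * \<psi> k j y)"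
    using Ufun_eq_sum[of k] assms by simp
  then show ?thesis
    by (simp add: sum_divide_distrib)
qed

lemma Ufun_Suc_last:
  assumes x: "x \<in> S"
  shows "Ufun S \<phi> u (Suc n) x = 0"
proof -
  have "\<forall>y\<in>S. Ufun S \<phi> u n y / \<psi> n n y = a n"
    using Ufun_quotient_eq_sum psi_diag_nonzero n_pos by simp
  then have "((\<lambda>y. Ufun S \<phi> u n y / \<psi> n n y) has_field_derivative 0) (at x within S)"
    by (rule has_field_derivative_transform_on[OF x _ DERIV_const])
  then have "Dw S (\<lambda>y. Ufun S \<phi> u n y / \<psi> n n y) x = 0"
    by (rule Dw_eqI[OF dense_S x])
  then show ?thesis
    using n_pos by (simp add: Ufun_Suc)
qed

lemma Ufun_quotient_has_derivative:
  assumes k: "k \<in> {1..n}" and x: "x \<in> S"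
  shows "((\<lambda>y. Ufun S \<phi> u k y / \<psi> k k y) has_field_derivative Ufun S \<phi> u (Suc k) x) (at x within S)"
proof (cases "k = n")
  case True
  have "\<forall>y\<in>S. Ufun S \<phi> u k y / \<psi> k k y = a n"
    using Ufun_quotient_eq_sum psi_diag_nonzero k True by simp
  then have "((\<lambda>y. Ufun S \<phi> u k y / \<psi> k k y) has_field_derivative 0) (at x within S)"
    by (rule has_field_derivative_transform_on[OF x _ DERIV_const])
  then show ?thesis
    using Ufun_Suc_last[OF x] True by simp
next
  case False
  then have k': "k \<in> {1..<n}"
    using k by auto
  have "\<forall>y\<in>S. Ufun S \<phi> u k y / \<psi> k k y = (\<Sum>j=k..n. a j * (\<psi> k j y / \<psi> k k y))"
    using Ufun_quotient_eq_sum[OF k] by blast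
  then have "((\<lambda>y. Ufun S \<phi> u k y / \<psi> k k y) has_field_derivative
      (\<Sum>j=Suc k..n. a j * \<psi> (Suc k) j x)) (at x within S)"
    by (rule has_field_derivative_transform_on[OF x _ sum_psi_quotient_has_derivative[OF k' x]])
  moreover have "Ufun S \<phi> u (Suc k) x = (\<Sum>j=Suc k..n. a j * \<psi> (Suc k) j x)"
    using Ufun_eq_sum[of "Suc k"] k' x by simp
  ultimately show ?thesis
    by simp
qed

lemma Mop_eq_Ufun_quotient:
  "1 \<le> k \<Longrightarrow> k \<le> n \<Longrightarrow> \<forall>x\<in>S. Mop S \<phi> n (k - 1) u x = Ufun S \<phi> u k x / \<psi> k k x"
proof (induction k rule: nat_induct_at_least)
  case base
  show ?case
    using inverse_psi_diag_eq_qfun[of 1] n_pos by (auto simp: divide_inverse mult.commute)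
next
  case (Suc k)
  then have k: "k \<in> {1..n}" "Suc k \<in> {1..n}"
    by auto
  show ?case
  proof
    fix x
    assume x: "x \<in> S"
    have "Mop S \<phi> n (Suc k - 1) u x = qfun S \<phi> n k x * Dw S (Mop S \<phi> n (k - 1) u) x"
      using k by (cases k) auto
    also have "Dw S (Mop S \<phi> n (k - 1) u) x = Dw S (\<lambda>y. Ufun S \<phi> u k y / \<psi> k k y) x"
      using Suc x k by (intro Dw_cong) auto
    also have "\<dots> = Ufun S \<phi> u (Suc k) x"
      using Dw_eqI[OF dense_S x Ufun_quotient_has_derivative[OF k(1) x]] .
    also have "qfun S \<phi> n k x = 1 / \<psi> (Suc k) (Suc k) x"
      using inverse_psi_diag_eq_qfun[OF k(2) x] by simp
    finally show "Mop S \<phi> n (Suc k - 1) u x = Ufun S \<phi> u (Suc k) x / \<psi> (Suc k) (Suc k) x"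
      by simp
  qed
qed

lemma Dw_Mop_last:
  assumes x: "x \<in> S"
  shows "Dw S (Mop S \<phi> n (n - 1) u) x = 0"
proof -
  have "Dw S (Mop S \<phi> n (n - 1) u) x = Dw S (\<lambda>y. Ufun S \<phi> u n y / \<psi> n n y) x"
    using Mop_eq_Ufun_quotient[of n] n_pos x by (intro Dw_cong) auto
  also have "\<dots> = Ufun S \<phi> u (Suc n) x"
    using n_pos by (intro Dw_eqI dense_S x Ufun_quotient_has_derivative) auto
  finally show ?thesis
    using Ufun_Suc_last x by simp
qed

end

lemma eventually_interior_S: "eventually (\<lambda>y. y \<in> interior S \<and> y \<in> S) (left_filter x0)"
  using eventually_interior_lint[OF T_less] unfolding S_def
  by eventually_elim (use interior_subset in blast)

lemma eventually_psi_quotient_DERIV: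
  "k \<in> {1..<n} \<Longrightarrow> j \<in> {k..n} \<Longrightarrow>
    eventually (\<lambda>y. DERIV (\<lambda>y. \<psi> k j y / \<psi> k k y) y :> \<psi> (Suc k) j y) (left_filter x0)"
  using eventually_interior_S
  by eventually_elim (use psi_quotient_has_derivative at_within_interior in metis)

lemma eventually_psi_isCont:
  "k \<in> {1..n} \<Longrightarrow> j \<in> {k..n} \<Longrightarrow> eventually (\<lambda>y. isCont (\<psi> k j) y) (left_filter x0)"
  using eventually_interior_S
  by eventually_elim (use psi_smooth Ck_on_continuous continuous_on_interior in blast)

lemma eventually_psi_diag_nonzero: "k \<in> {1..n} \<Longrightarrow> eventually (\<lambda>y. \<psi> k k y \<noteq> 0) (left_filter x0)"
  using eventually_interior_S by eventually_elim (use psi_diag_nonzero in blast)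

text \<open>The derivative of \<open>\<psi> k j / \<psi> k k\<close> is \<open>\<psi> (k + 1) j\<close>, eventually nonzero by induction on \<open>j - k\<close>.\<close>

lemma eventually_psi_nonzero:
  "1 \<le> k \<Longrightarrow> k \<le> j \<Longrightarrow> j \<le> n \<Longrightarrow> eventually (\<lambda>y. \<psi> k j y \<noteq> 0) (left_filter x0)"
proof (induction "j - k" arbitrary: k)
  case 0
  then show ?case
    using eventually_psi_diag_nonzero by auto
next
  case (Suc d)
  then have k: "k \<in> {1..<n}" "j \<in> {k..n}" "Suc k \<le> j"
    by auto
  have "eventually (\<lambda>y. \<psi> (Suc k) j y \<noteq> 0) (left_filter x0)"
    using Suc by simp
  then have "eventually (\<lambda>y. DERIV (\<lambda>y. \<psi> k j y / \<psi> k k y) y :> \<psi> (Suc k) j y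
      \<and> isCont (\<psi> (Suc k) j) y \<and> \<psi> (Suc k) j y \<noteq> 0) (left_filter x0)"
    using eventually_psi_quotient_DERIV[OF k(1,2)] eventually_psi_isCont[of "Suc k" j] k
    by (auto intro: eventually_conj)
  then have "eventually (\<lambda>y. \<psi> k j y / \<psi> k k y \<noteq> 0) (left_filter x0)"
    using T_less by (intro deriv_nonzero_left_filter(1)) auto
  then show ?case
    by eventually_elim auto
qed

lemma psi_quotient_ereal_limit:
  assumes "j \<in> {1..<n}" "j < m" "m \<le> n"
  shows "\<exists>L. ((\<lambda>y. ereal (\<psi> j m y / \<psi> j j y)) \<longlongrightarrow> L) (left_filter x0)"
proof (rule deriv_nonzero_left_filter(2))
  show "x0 \<noteq> -\<infinity>"
    using T_less by auto
  show "eventually (\<lambda>y. DERIV (\<lambda>y. \<psi> j m y / \<psi> j j y) y :> \<psi> (Suc j) m y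
      \<and> isCont (\<psi> (Suc j) m) y \<and> \<psi> (Suc j) m y \<noteq> 0) (left_filter x0)"
    using eventually_psi_quotient_DERIV[of j m] eventually_psi_isCont[of "Suc j" m]
      eventually_psi_nonzero[of "Suc j" m] assms
    by (auto intro: eventually_conj)
qed

lemma psi_ratio_lhopital:
  assumes k: "1 \<le> k" "k < j" "j < m" "m \<le> n"
    and f0: "((\<lambda>y. \<psi> k m y / \<psi> k k y) \<longlongrightarrow> 0) (left_filter x0)"
    and g0: "((\<lambda>y. \<psi> k j y / \<psi> k k y) \<longlongrightarrow> 0) (left_filter x0)"
    and lim: "filterlim (\<lambda>y. \<psi> (Suc k) m y / \<psi> (Suc k) j y) G (left_filter x0)"
  shows "filterlim (\<lambda>y. \<psi> k m y / \<psi> k j y) G (left_filter x0)"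
proof -
  have ev: "eventually (\<lambda>y. (\<psi> k m y / \<psi> k k y) / (\<psi> k j y / \<psi> k k y) = \<psi> k m y / \<psi> k j y)
      (left_filter x0)"
    using eventually_psi_diag_nonzero[of k] k by (auto elim!: eventually_mono)
  have "filterlim (\<lambda>y. (\<psi> k m y / \<psi> k k y) / (\<psi> k j y / \<psi> k k y)) G (left_filter x0)"
  proof (rule lhopital_left_filter[OF f0 g0 _ _ _ _ lim])
    show "eventually (\<lambda>y. \<psi> k j y / \<psi> k k y \<noteq> 0) (left_filter x0)"
      using eventually_psi_nonzero[of k j] eventually_psi_diag_nonzero[of k] k
      by (auto elim: eventually_elim2)
    show "eventually (\<lambda>y. \<psi> (Suc k) j y \<noteq> 0) (left_filter x0)"
      using eventually_psi_nonzero[of "Suc k" j] k by auto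
    show "eventually (\<lambda>y. DERIV (\<lambda>y. \<psi> k m y / \<psi> k k y) y :> \<psi> (Suc k) m y) (left_filter x0)"
      using eventually_psi_quotient_DERIV[of k m] k by auto
    show "eventually (\<lambda>y. DERIV (\<lambda>y. \<psi> k j y / \<psi> k k y) y :> \<psi> (Suc k) j y) (left_filter x0)"
      using eventually_psi_quotient_DERIV[of k j] k by auto
  qed
  then show ?thesis
    unfolding filterlim_cong[OF refl refl ev] .
qed

end

locale chebyshev_asymptotic_scale = positive_wronskian_system +
  assumes phi_eventually_nonzero: "\<forall>i\<in>{1..n}. eventually (\<lambda>x. \<phi> i x \<noteq> 0) (left_filter x0)"
    and phi_dominates: "\<forall>i\<in>{1..<n}. dominates (left_filter x0) (\<phi> i) (\<phi> (Suc i))"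
begin

lemma phi_dominates_later:
  assumes "1 \<le> j" "Suc j \<le> m" "m \<le> n"
  shows "dominates (left_filter x0) (\<phi> j) (\<phi> m)"
  using assms(2,3)
proof (induction m rule: nat_induct_at_least)
  case base
  then show ?case
    using phi_dominates assms(1) by auto
next
  case (Suc m)
  then have m: "m \<in> {1..<n}"
    using assms(1) by auto
  show ?case
  proof (rule dominates_trans)
    show "dominates (left_filter x0) (\<phi> j) (\<phi> m)"
      using Suc by simp
    show "dominates (left_filter x0) (\<phi> m) (\<phi> (Suc m))"
      using phi_dominates m by blast
    show "eventually (\<lambda>x. \<phi> m x \<noteq> 0) (left_filter x0)"
      using phi_eventually_nonzero m by auto
  qed
qed

text \<open>The limit of \<open>\<psi> i m / \<psi> i j\<close> exists for \<open>i = j\<close> by monotonicity, passes down to every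
  \<open>i < j\<close> by l'Hopital's rule (whose hypotheses are the induction hypothesis for smaller \<open>j\<close>),
  and is \<open>0\<close> for \<open>i = 1\<close>.\<close>

lemma psi_ratio_tendsto_0:
  assumes "1 \<le> k" "k \<le> j" "j < m" "m \<le> n"
  shows "((\<lambda>y. \<psi> k m y / \<psi> k j y) \<longlongrightarrow> 0) (left_filter x0)"
  using assms
proof (induction j arbitrary: k m rule: less_induct)
  case (less j)
  obtain L where L: "((\<lambda>y. ereal (\<psi> j m y / \<psi> j j y)) \<longlongrightarrow> L) (left_filter x0)"
    using psi_quotient_ereal_limit[of j m] less.prems by auto
  let ?G = "filtercomap ereal (nhds L)"
  have lower: "filterlim (\<lambda>y. \<psi> i m y / \<psi> i j y) ?G (left_filter x0)" if "i \<le> j" "1 \<le> i" for i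
    using that
  proof (induction rule: inc_induct)
    case base
    show ?case
      using L by (simp add: filterlim_filtercomap_iff o_def)
  next
    case (step l)
    then have l: "1 \<le> l" "l < j"
      by auto
    show ?case
    proof (rule psi_ratio_lhopital)
      show "((\<lambda>y. \<psi> l m y / \<psi> l l y) \<longlongrightarrow> 0) (left_filter x0)"
        using less.IH[of l l m] l less.prems by simp
      show "((\<lambda>y. \<psi> l j y / \<psi> l l y) \<longlongrightarrow> 0) (left_filter x0)"
        using less.IH[of l l j] l less.prems by simp
      show "filterlim (\<lambda>y. \<psi> (Suc l) m y / \<psi> (Suc l) j y) ?G (left_filter x0)"
        using step.IH l by simp
    qed (use l less.prems in simp_all)
  qed
  have "((\<lambda>y. ereal (\<phi> m y / \<phi> j y)) \<longlongrightarrow> L) (left_filter x0)"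
    using lower[of 1] less.prems by (simp add: filterlim_filtercomap_iff o_def)
  moreover have "((\<lambda>y. ereal (\<phi> m y / \<phi> j y)) \<longlongrightarrow> ereal 0) (left_filter x0)"
    using phi_dominates_later[of j m] less.prems by (simp add: dominates_def)
  ultimately have "L = ereal 0"
    using tendsto_unique[OF left_filter_ne_bot] by blast
  then show ?case
    using lower[of k] less.prems by (simp add: filterlim_filtercomap_iff o_def)
qed

lemma psi_dominates:
  "k \<in> {1..n} \<Longrightarrow> j \<in> {k..<n} \<Longrightarrow> dominates (left_filter x0) (\<psi> k j) (\<psi> k (Suc j))"
  unfolding dominates_def using psi_ratio_tendsto_0[of k j "Suc j"] by auto

lemma Mop_tendsto:
  assumes u_def: "u = (\<lambda>x. \<Sum>j=1..n. a j * \<phi> j x)" and k: "k \<in> {1..n}"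
  shows "(Mop S \<phi> n (k - 1) u \<longlongrightarrow> a k) (left_filter x0)"
proof -
  have ev: "eventually (\<lambda>y. Mop S \<phi> n (k - 1) u y = (\<Sum>j=k..n. a j * (\<psi> k j y / \<psi> k k y))) (left_filter x0)"
    using eventually_interior_S
    by eventually_elim (use Mop_eq_Ufun_quotient[OF u_def] Ufun_quotient_eq_sum[OF u_def] k in auto)
  have "((\<lambda>y. \<Sum>j=k..n. a j * (\<psi> k j y / \<psi> k k y)) \<longlongrightarrow> (\<Sum>j=k..n. a j * (if j = k then 1 else 0)))
      (left_filter x0)"
  proof (intro tendsto_sum tendsto_mult tendsto_const)
    fix j
    assume j: "j \<in> {k..n}"
    show "((\<lambda>y. \<psi> k j y / \<psi> k k y) \<longlongrightarrow> (if j = k then 1 else 0)) (left_filter x0)"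
    proof (cases "j = k")
      case True
      have "eventually (\<lambda>y. \<psi> k j y / \<psi> k k y = 1) (left_filter x0)"
        using eventually_psi_diag_nonzero[OF k] True by (auto elim!: eventually_mono)
      then show ?thesis
        using True by (simp add: tendsto_eventually)
    next
      case False
      then show ?thesis
        using psi_ratio_tendsto_0[of k k j] k j by auto
    qed
  qed
  moreover have "(\<Sum>j=k..n. a j * (if j = k then 1 else 0)) = a k"
    using k by (simp add: if_distrib sum.delta cong: if_cong)
  ultimately show ?thesis
    unfolding tendsto_cong[OF ev] by simp
qed

end

theorem proposition8p1:
  fixes T :: real and x0 :: ereal and n :: nat
    and \<phi> :: "nat \<Rightarrow> real \<Rightarrow> real" and a :: "nat \<Rightarrow> real" and u :: "real \<Rightarrow> real"
  defines "S \<equiv> lint T x0" and "F \<equiv> left_filter x0"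
  assumes Tx0: "ereal T < x0"
    and n2: "n \<ge> 2"
    and scale: "cheb_asym_scale T x0 n \<phi>"
    and AC: "\<forall>i\<in>{1..n}. ACk_on S (n - 1) (\<phi> i)"
    and Wpos: "\<forall>i\<in>{1..n}. \<forall>x\<in>S. wronskian S \<phi> i x > 0"
    and a_nz: "\<forall>j\<in>{1..n}. a j \<noteq> 0"
    and u_def: "u = (\<lambda>x. \<Sum>j=1..n. a j * \<phi> j x)"
  shows
    "(\<forall>k\<in>{1..<n}. \<forall>j\<in>{Suc k..n}. \<forall>x\<in>S.
        ((\<lambda>y. psi S \<phi> k j y / psi S \<phi> k k y) has_vector_derivative psi S \<phi> (Suc k) j x)
          (at x within S))
     \<and> (\<forall>k\<in>{1..n}. \<forall>x\<in>S.
        ((\<lambda>y. Ufun S \<phi> u k y / psi S \<phi> k k y) has_vector_derivative Ufun S \<phi> u (Suc k) x)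
          (at x within S))
     \<and> (\<forall>k\<in>{1..n}. \<forall>x\<in>S. psi S \<phi> k k x \<noteq> 0)
     \<and> (\<forall>k\<in>{1..n}. \<forall>x\<in>S. Ufun S \<phi> u k x = (\<Sum>j=k..n. a j * psi S \<phi> k j x))
     \<and> (\<forall>k\<in>{1..n}. \<forall>j\<in>{k..<n}. dominates F (psi S \<phi> k j) (psi S \<phi> k (Suc j)))
     \<and> (\<forall>k\<in>{1..n}. \<forall>x\<in>S. 1 / psi S \<phi> k k x = qfun S \<phi> n (k - 1) x)
     \<and> (\<forall>x\<in>S. Ufun S \<phi> u (Suc n) x = 0)
     \<and> (\<forall>x\<in>S. Dw S (Mop S \<phi> n (n - 1) u) x = 0)
     \<and> (\<forall>k\<in>{1..n}. \<forall>x\<in>S. Mop S \<phi> n (k - 1) u x = Ufun S \<phi> u k x / psi S \<phi> k k x)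
     \<and> (\<forall>k\<in>{1..n}. (Mop S \<phi> n (k - 1) u \<longlongrightarrow> a k) F)"
proof -
  interpret chebyshev_asymptotic_scale T x0 n \<phi> S
    using Tx0 n2 scale Wpos by unfold_locales (auto simp: S_def cheb_asym_scale_def)
  show ?thesis
    using psi_quotient_has_derivative Ufun_quotient_has_derivative[OF u_def] psi_diag_nonzero
      Ufun_eq_sum[OF u_def] psi_dominates inverse_psi_diag_eq_qfun Ufun_Suc_last[OF u_def]
      Dw_Mop_last[OF u_def] Mop_eq_Ufun_quotient[OF u_def] Mop_tendsto[OF u_def]
    by (auto simp: F_def has_real_derivative_iff_has_vector_derivative[symmetric])
qed

end
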